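(* Let $n\ge1$, $E,m\ge1$, and let $F:\{0,1\}^n\to\mathbb{F}^E_m\cap[0,1]$ be nondecreasing with respect to the lexicographic order $<_{\mathrm{dict}}$ with $F(1^n)=1$. Let $P_F(b):=F(b)-F(b^-)$ for $b\in\{0,1\}^n$, where $b^-$ is the lexicographic predecessor of $b$ and $F((0^n)^-):=0$. Define $p_F:\{0,1\}^*\to[0,1]$ by $p_F(b):=F(b1^{n-|b|})-F((b0^{n-|b|})^-)$ for $|b|\le n$ (exact real subtraction), and $p_F(bb'):=p_F(b)\,\mathbf{1}[b'=0\ldots0]$ for $b\in\{0,1\}^n$ and nonempty $b'\in\{0,1\}^+$. Then $p_F$ is a binary-coded probability distribution and $p_F(b)=P_F(b)$ for all $b\in\{0,1\}^n$.
   Context: $\mathbb{F}^E_m\cap[0,1]$ denotes the set of real numbers in $[0,1]$ exactly representable as IEEE-754-style floating-point numbers with $E$ exponent bits and $m$ mantissa bits (subnormals included). A binary-coded probability distribution is a map $p:\{0,1\}^*\to[0,1]$ with $p(\varepsilon)=1$ and $p(b)=p(b0)+p(b1)$ for every finite binary string $b$ ($\varepsilon$ the empty string). *)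

theory Defs
  imports Complex_Main
begin

text \<open>Binary strings are bool lists; False = 0, True = 1.\<close>

text \<open>IEEE-754-style floats with E exponent bits and m mantissa bits (subnormals
  included; the all-ones exponent is reserved for infinities/NaNs).
  Bias = 2^(E-1) - 1.\<close>
definition fp_bias :: "nat \<Rightarrow> int" where
  "fp_bias E = 2 ^ (E - 1) - 1"

definition float_set :: "nat \<Rightarrow> nat \<Rightarrow> real set" where
  "float_set E m =
     {x. \<exists>(k::nat) (e::int). k < 2 ^ m \<and> 1 \<le> e \<and> e \<le> 2 ^ E - 2 \<and>
          (x = (1 + real k / 2 ^ m) * 2 powr real_of_int (e - fp_bias E) \<or>
           x = - ((1 + real k / 2 ^ m) * 2 powr real_of_int (e - fp_bias E)))}
   \<union> {x. \<exists>(k::nat). k < 2 ^ m \<and>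
          (x = (real k / 2 ^ m) * 2 powr real_of_int (1 - fp_bias E) \<or>
           x = - ((real k / 2 ^ m) * 2 powr real_of_int (1 - fp_bias E)))}"

definition dict_less :: "bool list \<Rightarrow> bool list \<Rightarrow> bool" where
  "dict_less b c \<longleftrightarrow> length b = length c \<and>
     (\<exists>p s t. b = p @ False # s \<and> c = p @ True # t)"

definition dict_pred :: "bool list \<Rightarrow> bool list" where
  "dict_pred b = (THE c. length c = length b \<and> dict_less c b \<and>
       \<not> (\<exists>d. length d = length b \<and> dict_less c d \<and> dict_less d b))"

definition F_minus :: "(bool list \<Rightarrow> real) \<Rightarrow> nat \<Rightarrow> bool list \<Rightarrow> real" where
  "F_minus F n b = (if b = replicate n False then 0 else F (dict_pred b))"

definition P_F :: "(bool list \<Rightarrow> real) \<Rightarrow> nat \<Rightarrow> bool list \<Rightarrow> real" where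
  "P_F F n b = F b - F_minus F n b"

definition p_F :: "(bool list \<Rightarrow> real) \<Rightarrow> nat \<Rightarrow> bool list \<Rightarrow> real" where
  "p_F F n b =
     (if length b \<le> n
      then F (b @ replicate (n - length b) True) - F_minus F n (b @ replicate (n - length b) False)
      else (F (take n b) - F_minus F n (take n b)) * (if (\<forall>x\<in>set (drop n b). \<not> x) then 1 else 0))"

definition binary_coded_distribution :: "(bool list \<Rightarrow> real) \<Rightarrow> bool" where
  "binary_coded_distribution p \<longleftrightarrow>
     (\<forall>b. 0 \<le> p b \<and> p b \<le> 1) \<and> p [] = 1 \<and>
     (\<forall>b. p b = p (b @ [False]) + p (b @ [True]))"

end

theory Submission
  imports Defs
begin

text \<open>Read as binary numbers, strings of length n are ordered by their values, and the
  lexicographic predecessor of p10...0 is p01...1, one less. For a prefix b, p_F(b) is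
  therefore the increment of F over the interval of strings extending b; it lies in
  [0,1] because F is monotone with values in [0,1], and it is additive because the
  intervals of b0 and b1 are adjacent and together make up that of b.\<close>

definition bin_val :: "bool list \<Rightarrow> nat" where
  "bin_val bs = horner_sum of_bool 2 (rev bs)"

lemma bin_val_Nil [simp]: "bin_val [] = 0"
  by (simp add: bin_val_def)

lemma bin_val_append: "bin_val (xs @ ys) = bin_val xs * 2 ^ length ys + bin_val ys"
  by (simp add: bin_val_def horner_sum_append)

lemma bin_val_Cons: "bin_val (x # xs) = of_bool x * 2 ^ length xs + bin_val xs"
  using bin_val_append[of "[x]" xs] by (simp add: bin_val_def)

lemma bin_val_replicate_False [simp]: "bin_val (replicate k False) = 0"
  by (induction k) (simp_all add: bin_val_Cons)

lemma bin_val_replicate_True: "bin_val (replicate k True) + 1 = 2 ^ k"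
  by (induction k) (simp_all add: bin_val_Cons)

lemma dict_less_iff_lexordp:
  "length b = length c \<Longrightarrow> dict_less b c \<longleftrightarrow> ord_class.lexordp b c"
  unfolding dict_less_def lexordp_iff by (fastforce simp: less_bool_def)

lemma dict_less_iff_bin_val_less:
  "length b = length c \<Longrightarrow> dict_less b c \<longleftrightarrow> bin_val b < bin_val c"
  by (simp add: dict_less_iff_lexordp bin_val_def horner_sum_less_iff_lexordp)

lemma bin_val_inj:
  assumes "length b = length c" and "bin_val b = bin_val c"
  shows "b = c"
proof (rule ccontr)
  assume "b \<noteq> c"
  then have "ord_class.lexordp b c \<or> ord_class.lexordp c b"
    using lexordp_linear by blast
  then have "bin_val b < bin_val c \<or> bin_val c < bin_val b"
    using assms(1) dict_less_iff_lexordp dict_less_iff_bin_val_less by metis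
  with assms(2) show False by simp
qed

lemma split_last_True: "True \<in> set b \<Longrightarrow> \<exists>p k. b = p @ True # replicate k False"
proof -
  assume "True \<in> set b"
  then obtain ys zs where b: "b = rev zs @ True # rev ys" and "True \<notin> set ys"
    using split_list_first[of True "rev b"] by (auto simp: rev_swap)
  then have "rev ys = replicate (length ys) False"
    by (auto intro: replicate_eqI)
  with b show ?thesis by metis
qed

text \<open>The binary value drops by exactly one, so no string lies strictly in between.\<close>
lemma dict_pred_append_True_replicate_False:
  "dict_pred (p @ True # replicate k False) = p @ False # replicate k True"
proof -
  let ?c = "p @ True # replicate k False" and ?d = "p @ False # replicate k True"
  have val: "bin_val ?d + 1 = bin_val ?c"
    using bin_val_replicate_True[of k] by (simp add: bin_val_append bin_val_Cons)
  have len: "length ?d = length ?c" by simp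
  have less_c: "dict_less e ?c \<longleftrightarrow> bin_val e \<le> bin_val ?d" if "length e = length ?c" for e
    using that val dict_less_iff_bin_val_less[of e ?c] by linarith
  show ?thesis
    unfolding dict_pred_def
  proof (rule the_equality)
    show "length ?d = length ?c \<and> dict_less ?d ?c \<and>
        \<not> (\<exists>e. length e = length ?c \<and> dict_less ?d e \<and> dict_less e ?c)"
      using len less_c dict_less_iff_bin_val_less[of ?d] by auto
  next
    fix e assume e: "length e = length ?c \<and> dict_less e ?c \<and>
        \<not> (\<exists>f. length f = length ?c \<and> dict_less e f \<and> dict_less f ?c)"
    then have "bin_val e \<le> bin_val ?d" using less_c by blast
    moreover have "\<not> bin_val e < bin_val ?d"
      using e len less_c[of ?d] dict_less_iff_bin_val_less[of e ?d] by auto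
    ultimately show "e = ?d" using bin_val_inj[of e ?d] e len by simp
  qed
qed

lemma dict_pred_less:
  assumes "b \<noteq> replicate (length b) False"
  shows "length (dict_pred b) = length b" and "dict_less (dict_pred b) b"
proof -
  have "True \<in> set b" using assms by (metis replicate_length_same)
  then obtain p k where b: "b = p @ True # replicate k False" using split_last_True by blast
  show "length (dict_pred b) = length b"
    unfolding b dict_pred_append_True_replicate_False by simp
  show "dict_less (dict_pred b) b"
    unfolding b dict_pred_append_True_replicate_False dict_less_def by fastforce
qed

lemma F_minus_append_True_replicate_False:
  "F_minus F n (p @ True # replicate k False) = F (p @ False # replicate k True)"
proof -
  have "p @ True # replicate k False \<noteq> replicate n False"
    by (metis in_set_conv_decomp in_set_replicate)
  then show ?thesis by (simp add: F_minus_def dict_pred_append_True_replicate_False)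
qed

lemma p_F_Nil: "F (replicate n True) = 1 \<Longrightarrow> p_F F n [] = 1"
  by (simp add: p_F_def F_minus_def)

lemma p_F_eq_P_F: "length b = n \<Longrightarrow> p_F F n b = P_F F n b"
  by (simp add: p_F_def P_F_def)

text \<open>Below length n the intervals of b0 and b1 meet where b01...1 is the predecessor of
  b10...0, so the inner terms cancel; from length n on all mass goes to the child 0.\<close>
lemma p_F_split: "p_F F n b = p_F F n (b @ [False]) + p_F F n (b @ [True])"
proof -
  consider (short) k where "n - length b = Suc k" | (full) "length b = n" | (long) "length b > n"
    by (cases "n - length b") (auto dest: le_neq_implies_less)
  then show ?thesis
  proof cases
    case short
    then have "length b < n" and "n - Suc (length b) = k" by simp_all
    with short show ?thesis
      by (simp add: p_F_def F_minus_append_True_replicate_False[of F n b k])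
  next
    case full
    then show ?thesis by (auto simp: p_F_def)
  next
    case long
    then have "take n (b @ [x]) = take n b" and "drop n (b @ [x]) = drop n b @ [x]" for x
      by simp_all
    with long show ?thesis by (simp add: p_F_def)
  qed
qed

context
  fixes n :: nat and F :: "bool list \<Rightarrow> real"
  assumes F_nonneg: "\<And>b. length b = n \<Longrightarrow> 0 \<le> F b"
    and F_le_1: "\<And>b. length b = n \<Longrightarrow> F b \<le> 1"
    and F_mono: "\<And>b c. length b = n \<Longrightarrow> length c = n \<Longrightarrow> dict_less b c \<Longrightarrow> F b \<le> F c"
begin

lemma F_minus_nonneg: "length c = n \<Longrightarrow> 0 \<le> F_minus F n c"
  using dict_pred_less(1)[of c] by (auto simp: F_minus_def intro: F_nonneg)

lemma F_minus_le:
  assumes "length c = n" and "length d = n" and "bin_val c \<le> bin_val d"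
  shows "F_minus F n c \<le> F d"
proof (cases "c = replicate n False")
  case True
  then show ?thesis using F_nonneg assms by (simp add: F_minus_def)
next
  case False
  then have "length (dict_pred c) = n" and "bin_val (dict_pred c) < bin_val d"
    using dict_pred_less[of c] assms dict_less_iff_bin_val_less[of "dict_pred c" c] by auto
  then show ?thesis
    using False F_mono assms dict_less_iff_bin_val_less by (simp add: F_minus_def)
qed

lemma p_F_nonneg: "0 \<le> p_F F n b"
proof (cases "length b \<le> n")
  case True
  have "bin_val (b @ replicate (n - length b) False) \<le> bin_val (b @ replicate (n - length b) True)"
    by (simp add: bin_val_append)
  then show ?thesis using True F_minus_le by (simp add: p_F_def)
next
  case False
  then show ?thesis using F_minus_le[of "take n b" "take n b"] by (simp add: p_F_def)
qed

lemma p_F_le_1: "p_F F n b \<le> 1"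
proof (cases "length b \<le> n")
  case True
  then show ?thesis
    using F_le_1[of "b @ replicate (n - length b) True"]
      F_minus_nonneg[of "b @ replicate (n - length b) False"]
    by (simp add: p_F_def)
next
  case False
  have "F (take n b) - F_minus F n (take n b) \<le> 1"
    using False F_le_1[of "take n b"] F_minus_nonneg[of "take n b"] by simp
  then show ?thesis using False by (simp add: p_F_def)
qed

end

theorem proposition5p13:
  fixes n E m :: nat and F :: "bool list \<Rightarrow> real"
  assumes "n \<ge> 1" and "E \<ge> 1" and "m \<ge> 1"
    and "\<forall>b. length b = n \<longrightarrow> F b \<in> float_set E m \<and> 0 \<le> F b \<and> F b \<le> 1"
    and "\<forall>b c. length b = n \<and> length c = n \<and> dict_less b c \<longrightarrow> F b \<le> F c"
    and "F (replicate n True) = 1"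
  shows "binary_coded_distribution (p_F F n) \<and>
         (\<forall>b. length b = n \<longrightarrow> p_F F n b = P_F F n b)"
proof -
  have "0 \<le> p_F F n b" and "p_F F n b \<le> 1" for b
    using p_F_nonneg[of n F b] p_F_le_1[of n F b] assms(4,5) by blast+
  then show ?thesis
    using p_F_Nil[of F n, OF assms(6)] p_F_split p_F_eq_P_F
    unfolding binary_coded_distribution_def by blast
qed

end
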